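(* Let $(a_n)_{n\ge1}$ be a relative convex real sequence which is bounded above. Then either $(a_n)_{n\ge1}$ is non-increasing, or every sequence $(t_n)_{n\ge1}\in T_a$ is convergent. More precisely, if some $(t_n)_{n\ge1}\in T_a$ satisfies $t_n\to\infty$, then $\Delta a_n\le0$ for all $n\ge1$.
   Context: For a real sequence $(x_i)$, $\Delta x_i=x_{i+1}-x_i$. "Increasing" means strictly increasing. For a real sequence $a=(a_i)_{i\ge1}$, $T_a$ denotes the set of increasing real sequences $(t_i)_{i\ge1}$ such that $(\Delta a_i/\Delta t_i)_{i\ge1}$ is non-decreasing; $a$ is relative convex if $T_a\neq\emptyset$. *)

theory Defs
  imports Complex_Main
begin

text \<open>Sequences indexed by nat (index 0 plays the role of index 1 in the paper).\<close>

definition Delta :: "(nat \<Rightarrow> real) \<Rightarrow> nat \<Rightarrow> real" where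
  "Delta x i = x (Suc i) - x i"

definition T_set :: "(nat \<Rightarrow> real) \<Rightarrow> (nat \<Rightarrow> real) set" where
  "T_set a = {t. strict_mono t \<and> mono (\<lambda>i. Delta a i / Delta t i)}"

definition relative_convex :: "(nat \<Rightarrow> real) \<Rightarrow> bool" where
  "relative_convex a \<longleftrightarrow> T_set a \<noteq> {}"

end

theory Submission
  imports Defs
begin

text \<open>If some step \<open>\<Delta>a\<^sub>n\<close> were positive, the non-decreasing slopes
  \<open>\<Delta>a\<^sub>i / \<Delta>t\<^sub>i \<ge> r := \<Delta>a\<^sub>n / \<Delta>t\<^sub>n > 0\<close> for \<open>i \<ge> n\<close> would give
  \<open>a\<^sub>m - a\<^sub>n \<ge> r (t\<^sub>m - t\<^sub>n)\<close>, so an unbounded \<open>t\<close> forces an unbounded \<open>a\<close>.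
  A non-convergent \<open>t \<in> T\<^sub>a\<close> is increasing and hence unbounded, which
  makes \<open>a\<close> non-increasing.\<close>

lemma T_set_strict_mono: "t \<in> T_set a \<Longrightarrow> strict_mono t"
  by (simp add: T_set_def)

lemma T_set_slopes_mono: "t \<in> T_set a \<Longrightarrow> mono (\<lambda>i. Delta a i / Delta t i)"
  by (simp add: T_set_def)

lemma Delta_pos_if_strict_mono: "strict_mono t \<Longrightarrow> Delta t i > 0"
  by (simp add: Delta_def strict_mono_def)

lemma T_set_chord_ge_slope:
  assumes t: "t \<in> T_set a" and "n \<le> m"
  shows "Delta a n / Delta t n * (t m - t n) \<le> a m - a n"
  using \<open>n \<le> m\<close>
proof (induction m rule: dec_induct)
  case base
  show ?case by simp
next
  case (step m)
  have "Delta a n / Delta t n \<le> Delta a m / Delta t m"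
    using T_set_slopes_mono[OF t] step.hyps(1) by (simp add: mono_def)
  then have "Delta a n / Delta t n * Delta t m \<le> Delta a m"
    using Delta_pos_if_strict_mono[OF T_set_strict_mono[OF t]] by (simp add: pos_le_divide_eq)
  moreover have "t (Suc m) - t n = (t m - t n) + Delta t m"
    by (simp add: Delta_def)
  ultimately show ?case
    using step.IH by (simp only: distrib_left) (simp add: Delta_def)
qed

lemma T_set_unbounded_imp_Delta_nonpos:
  assumes t: "t \<in> T_set a" and a_bdd: "bdd_above (range a)"
    and t_unbdd: "\<not> bdd_above (range t)"
  shows "Delta a n \<le> 0"
proof (rule ccontr)
  assume "\<not> Delta a n \<le> 0"
  define r where "r = Delta a n / Delta t n"
  have "r > 0"
    using \<open>\<not> Delta a n \<le> 0\<close> Delta_pos_if_strict_mono[OF T_set_strict_mono[OF t], of n]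
    by (simp add: r_def)
  obtain M where M: "\<And>i. a i \<le> M" using a_bdd by (auto simp: bdd_above_def)
  have "t m \<le> t n + (M - a n) / r" for m
  proof (cases "n \<le> m")
    case True
    have "r * (t m - t n) \<le> M - a n"
      using T_set_chord_ge_slope[OF t True] M[of m] by (simp add: r_def)
    with \<open>r > 0\<close> have "t m - t n \<le> (M - a n) / r"
      by (simp add: pos_le_divide_eq mult.commute)
    then show ?thesis by simp
  next
    case False
    then have "t m < t n" using T_set_strict_mono[OF t] by (simp add: strict_mono_less)
    moreover have "0 \<le> (M - a n) / r" using \<open>r > 0\<close> M[of n] by simp
    ultimately show ?thesis by linarith
  qed
  with t_unbdd show False by (auto simp: bdd_above_def)
qed

lemma incseq_not_convergent_imp_unbounded:
  fixes t :: "nat \<Rightarrow> real"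
  assumes "incseq t" and "\<not> convergent t"
  shows "\<not> bdd_above (range t)"
  using LIMSEQ_incseq_SUP[OF _ assms(1)] assms(2) by (auto simp: convergent_def)

lemma filterlim_at_top_imp_unbounded:
  fixes t :: "nat \<Rightarrow> real"
  assumes "filterlim t at_top sequentially"
  shows "\<not> bdd_above (range t)"
proof
  assume "bdd_above (range t)"
  then obtain B where "\<And>m. t m \<le> B" by (auto simp: bdd_above_def)
  moreover have "eventually (\<lambda>m. t m > B) sequentially"
    using assms by (simp add: filterlim_at_top_dense)
  ultimately show False by (auto simp: eventually_sequentially not_less[symmetric])
qed

theorem proposition3p4:
  fixes a :: "nat \<Rightarrow> real"
  assumes "relative_convex a"
    and "bdd_above (range a)"
  shows "(decseq a \<or> (\<forall>t\<in>T_set a. convergent t))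
       \<and> ((\<exists>t\<in>T_set a. filterlim t at_top sequentially) \<longrightarrow> (\<forall>n. Delta a n \<le> 0))"
proof
  show "decseq a \<or> (\<forall>t\<in>T_set a. convergent t)"
  proof (cases "\<forall>t\<in>T_set a. convergent t")
    case False
    then obtain t where t: "t \<in> T_set a" and "\<not> convergent t" by blast
    moreover have "incseq t" using T_set_strict_mono[OF t] by (simp add: strict_mono_mono)
    ultimately have "\<And>n. Delta a n \<le> 0"
      using T_set_unbounded_imp_Delta_nonpos[OF t assms(2)]
        incseq_not_convergent_imp_unbounded by blast
    then show ?thesis by (simp add: decseq_SucI Delta_def)
  qed simp
  show "(\<exists>t\<in>T_set a. filterlim t at_top sequentially) \<longrightarrow> (\<forall>n. Delta a n \<le> 0)"
    using T_set_unbounded_imp_Delta_nonpos[OF _ assms(2)] filterlim_at_top_imp_unbounded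
    by blast
qed

end
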